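(* A binary network $N$ is orchard if and only if $N$ admits an HGT-consistent labelling.
   Context: A (directed phylogenetic) network on a finite taxa set $X$ is a directed acyclic graph without parallel arcs whose nodes are of the following types: a unique root (indegree 0, outdegree 1); tree nodes (indegree 1, outdegree at least 2); reticulations (indegree at least 2, outdegree 1); leaves (indegree 1, outdegree 0), the leaves being bijectively labelled by $X$. Non-leaf nodes are called internal. A network is binary if every tree node and every reticulation has total degree (indegree plus outdegree) exactly 3. A tree is a network without reticulations. Orchard networks: An ordered pair of leaves $(x,y)$ is a cherry if $x$ and $y$ have a common parent; it is a reticulated cherry if the parent $p_x$ of $x$ is a reticulation and $p_x$ and $y$ have a common parent. Let $p_x,p_y$ be the parents of $x,y$. Reducing $(x,y)$ in a network $N$: if $(x,y)$ is a cherry, delete $x$ and suppress $p_x$ if it now has indegree 1 and outdegree 1; if $(x,y)$ is a reticulated cherry, delete the arc $(p_y,p_x)$ and suppress any resulting node of indegree 1 and outdegree 1; otherwise do nothing. (Suppressing a node $v$ with one parent $u$ and one child $w$ means deleting $v$ and adding the arc $(u,w)$.) For a sequence $S$ of ordered pairs, $NS$ denotes the result of reducing the pairs of $S$ in order. $N$ is orchard if there is a sequence $S$ such that $NS$ is a tree with exactly one leaf. HGT-consistent labelling: Let $N$ be a binary network with node set $V$. An HGT-consistent labelling of $N$ is a map $t:V\to\mathbb{R}$ such that (1) for every arc $(u,v)$, $t(u)\le t(v)$, and equality is allowed only if $v$ is a reticulation; (2) every internal node $u$ has a child $v$ with $t(u)<t(v)$; (3) for every reticulation $r$ with parents $u$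 and $v$, exactly one of $t(u)=t(r)$ and $t(v)=t(r)$ holds. *)

theory Defs
  imports Complex_Main
begin

(* A network is represented by its node set V and its arc set A (a set of pairs,
   hence no parallel arcs).  Leaves are identified with the taxa they carry. *)

type_synonym 'a net = "'a set \<times> ('a \<times> 'a) set"

definition indeg :: "('a \<times> 'a) set \<Rightarrow> 'a \<Rightarrow> nat" where
  "indeg A v = card {u. (u, v) \<in> A}"

definition outdeg :: "('a \<times> 'a) set \<Rightarrow> 'a \<Rightarrow> nat" where
  "outdeg A v = card {w. (v, w) \<in> A}"

definition is_root :: "('a \<times> 'a) set \<Rightarrow> 'a \<Rightarrow> bool" where
  "is_root A v \<longleftrightarrow> indeg A v = 0 \<and> outdeg A v = 1"

definition is_tree_node :: "('a \<times> 'a) set \<Rightarrow> 'a \<Rightarrow> bool" where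
  "is_tree_node A v \<longleftrightarrow> indeg A v = 1 \<and> outdeg A v \<ge> 2"

definition is_ret :: "('a \<times> 'a) set \<Rightarrow> 'a \<Rightarrow> bool" where
  "is_ret A v \<longleftrightarrow> indeg A v \<ge> 2 \<and> outdeg A v = 1"

definition is_leaf :: "('a \<times> 'a) set \<Rightarrow> 'a \<Rightarrow> bool" where
  "is_leaf A v \<longleftrightarrow> indeg A v = 1 \<and> outdeg A v = 0"

definition network :: "'a net \<Rightarrow> bool" where
  "network N \<longleftrightarrow> (case N of (V, A) \<Rightarrow>
     finite V \<and> A \<subseteq> V \<times> V \<and> acyclic A \<and>
     (\<exists>!r. r \<in> V \<and> is_root A r) \<and>
     (\<forall>v\<in>V. is_root A v \<or> is_tree_node A v \<or> is_ret A v \<or> is_leaf A v))"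

definition binary :: "'a net \<Rightarrow> bool" where
  "binary N \<longleftrightarrow> (case N of (V, A) \<Rightarrow>
     (\<forall>v\<in>V. (is_tree_node A v \<or> is_ret A v) \<longrightarrow> indeg A v + outdeg A v = 3))"

definition is_tree :: "'a net \<Rightarrow> bool" where
  "is_tree N \<longleftrightarrow> network N \<and> (\<forall>v\<in>fst N. \<not> is_ret (snd N) v)"

definition leaves :: "'a net \<Rightarrow> 'a set" where
  "leaves N = {v \<in> fst N. is_leaf (snd N) v}"

definition suppress :: "'a net \<Rightarrow> 'a \<Rightarrow> 'a net" where
  "suppress N v = (case N of (V, A) \<Rightarrow>
     (V - {v}, {(a, b) \<in> A. a \<noteq> v \<and> b \<noteq> v} \<union> {(u, w). (u, v) \<in> A \<and> (v, w) \<in> A}))"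

definition suppress_if :: "'a net \<Rightarrow> 'a \<Rightarrow> 'a net" where
  "suppress_if N v = (if v \<in> fst N \<and> indeg (snd N) v = 1 \<and> outdeg (snd N) v = 1
                      then suppress N v else N)"

definition parent :: "('a \<times> 'a) set \<Rightarrow> 'a \<Rightarrow> 'a" where
  "parent A x = (THE p. (p, x) \<in> A)"

definition is_cherry :: "'a net \<Rightarrow> 'a \<Rightarrow> 'a \<Rightarrow> bool" where
  "is_cherry N x y \<longleftrightarrow> x \<in> leaves N \<and> y \<in> leaves N \<and> x \<noteq> y \<and>
     (\<exists>p. (p, x) \<in> snd N \<and> (p, y) \<in> snd N)"

definition is_ret_cherry :: "'a net \<Rightarrow> 'a \<Rightarrow> 'a \<Rightarrow> bool" where
  "is_ret_cherry N x y \<longleftrightarrow> x \<in> leaves N \<and> y \<in> leaves N \<and> x \<noteq> y \<and>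
     is_ret (snd N) (parent (snd N) x) \<and>
     (\<exists>q. (q, parent (snd N) x) \<in> snd N \<and> (q, y) \<in> snd N)"

definition reduce_pair :: "'a net \<Rightarrow> 'a \<times> 'a \<Rightarrow> 'a net" where
  "reduce_pair N xy = (case xy of (x, y) \<Rightarrow>
     (let px = parent (snd N) x; py = parent (snd N) y in
      if is_cherry N x y then
        suppress_if (fst N - {x}, snd N - {(px, x)}) px
      else if is_ret_cherry N x y then
        suppress_if (suppress_if (fst N, snd N - {(py, px)}) px) py
      else N))"

definition reduce_seq :: "'a net \<Rightarrow> ('a \<times> 'a) list \<Rightarrow> 'a net" where
  "reduce_seq N S = foldl reduce_pair N S"

definition orchard :: "'a net \<Rightarrow> bool" where
  "orchard N \<longleftrightarrow> (\<exists>S. is_tree (reduce_seq N S) \<and> card (leaves (reduce_seq N S)) = 1)"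

definition hgt_consistent :: "'a net \<Rightarrow> ('a \<Rightarrow> real) \<Rightarrow> bool" where
  "hgt_consistent N t \<longleftrightarrow> (case N of (V, A) \<Rightarrow>
     (\<forall>(u, v)\<in>A. t u \<le> t v \<and> (t u = t v \<longrightarrow> is_ret A v)) \<and>
     (\<forall>u\<in>V. \<not> is_leaf A u \<longrightarrow> (\<exists>v. (u, v) \<in> A \<and> t u < t v)) \<and>
     (\<forall>r\<in>V. is_ret A r \<longrightarrow>
        (\<forall>u v. (u, r) \<in> A \<and> (v, r) \<in> A \<and> u \<noteq> v \<longrightarrow> ((t u = t r) \<noteq> (t v = t r)))))"

end

theory Submission
  imports Defs
begin

text \<open>
  Both kinds of reduction turn a binary network into the network obtained by deleting a set D of
  nodes (x and its parent for a cherry (x, y), the two parents for a reticulated cherry) and adding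
  shortcut arcs that bypass D and end in leaves. An HGT-consistent labelling of the network
  restricts to the reduced network as long as the shortcuts increase the label, which for a
  reticulated cherry means that the parents of x and y carry the same label. Conversely, a
  labelling of the reduced network extends back by placing the nodes of D just below the leaves.
  Trees are labelled by the number of ancestors, which gives one direction. For the other, an
  inner node of maximal label always exposes a reducible pair: its children above it are leaves,
  and if it is a reticulation, the parent sharing its label has a leaf child as well. Induction on
  the number of nodes finishes the proof.
\<close>

definition preds :: "('a \<times> 'a) set \<Rightarrow> 'a \<Rightarrow> 'a set" where
  "preds A v = {u. (u, v) \<in> A}"

definition succs :: "('a \<times> 'a) set \<Rightarrow> 'a \<Rightarrow> 'a set" where
  "succs A v = {w. (v, w) \<in> A}"

lemma indeg_eq_card_preds: "indeg A v = card (preds A v)"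
  by (simp add: indeg_def preds_def)

lemma outdeg_eq_card_succs: "outdeg A v = card (succs A v)"
  by (simp add: outdeg_def succs_def)

lemma parent_eqI: "preds A x = {p} \<Longrightarrow> parent A x = p"
  unfolding parent_def preds_def by (metis mem_Collect_eq singletonD singletonI the_equality)

lemma card_insert_Diff_swap: "finite S \<Longrightarrow> a \<in> S \<Longrightarrow> b \<notin> S \<Longrightarrow> card (insert b (S - {a})) = card S"
  by (simp add: card_Suc_Diff1 del: card_Diff_insert)

lemma leaf_not_ret: "is_leaf A v \<Longrightarrow> \<not> is_ret A v"
  by (simp add: is_leaf_def is_ret_def)

lemma ret_not_leaf: "is_ret A v \<Longrightarrow> \<not> is_leaf A v"
  by (simp add: is_leaf_def is_ret_def)

lemma hgt_consistentI:
  assumes "\<And>u v. (u, v) \<in> A \<Longrightarrow> t u \<le> t v \<and> (t u = t v \<longrightarrow> is_ret A v)"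
    and "\<And>u. u \<in> V \<Longrightarrow> \<not> is_leaf A u \<Longrightarrow> \<exists>v. (u, v) \<in> A \<and> t u < t v"
    and "\<And>r u v. r \<in> V \<Longrightarrow> is_ret A r \<Longrightarrow> (u, r) \<in> A \<Longrightarrow> (v, r) \<in> A \<Longrightarrow> u \<noteq> v
           \<Longrightarrow> (t u = t r) \<noteq> (t v = t r)"
  shows "hgt_consistent (V, A) t"
  using assms unfolding hgt_consistent_def by blast

lemma hgt_arc_le: "hgt_consistent (V, A) t \<Longrightarrow> (u, v) \<in> A \<Longrightarrow> t u \<le> t v"
  by (auto simp: hgt_consistent_def)

lemma hgt_arc_eq_imp_ret: "hgt_consistent (V, A) t \<Longrightarrow> (u, v) \<in> A \<Longrightarrow> t u = t v \<Longrightarrow> is_ret A v"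
  by (auto simp: hgt_consistent_def)

lemma hgt_arc_less: "hgt_consistent (V, A) t \<Longrightarrow> (u, v) \<in> A \<Longrightarrow> \<not> is_ret A v \<Longrightarrow> t u < t v"
  using hgt_arc_le hgt_arc_eq_imp_ret by fastforce

lemma hgt_increasing_child:
  "hgt_consistent (V, A) t \<Longrightarrow> u \<in> V \<Longrightarrow> \<not> is_leaf A u \<Longrightarrow> \<exists>v. (u, v) \<in> A \<and> t u < t v"
  by (auto simp: hgt_consistent_def)

lemma hgt_ret_parents:
  "hgt_consistent (V, A) t \<Longrightarrow> r \<in> V \<Longrightarrow> is_ret A r \<Longrightarrow> (u, r) \<in> A \<Longrightarrow> (v, r) \<in> A \<Longrightarrow> u \<noteq> v
   \<Longrightarrow> (t u = t r) \<noteq> (t v = t r)"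
  unfolding hgt_consistent_def by blast

lemma acyclic_strict_labelling:
  assumes "finite V" "A \<subseteq> V \<times> V" "acyclic A"
  obtains t :: "'a \<Rightarrow> real" where "\<And>u v. (u, v) \<in> A \<Longrightarrow> t u < t v"
proof
  define t where "t v = real (card {u. (u, v) \<in> A\<^sup>+})" for v
  have finite_ancestors: "finite {u. (u, v) \<in> A\<^sup>+}" for v
    using assms(1) trancl_subset_Sigma[OF assms(2)] by (auto intro: finite_subset)
  show "t u < t v" if "(u, v) \<in> A" for u v
  proof -
    have "{w. (w, u) \<in> A\<^sup>+} \<subset> {w. (w, v) \<in> A\<^sup>+}"
      using that assms(3) by (auto simp: acyclic_def intro: trancl_into_trancl)
    then show ?thesis
      unfolding t_def using finite_ancestors psubset_card_mono by (metis of_nat_less_iff)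
  qed
qed

lemma tree_hgt_consistent:
  fixes V :: "'a set"
  assumes "is_tree (V, A)"
  shows "\<exists>t. hgt_consistent (V, A) t"
proof -
  have network: "network (V, A)" and no_ret: "\<And>v. v \<in> V \<Longrightarrow> \<not> is_ret A v"
    using assms by (auto simp: is_tree_def)
  obtain t :: "'a \<Rightarrow> real" where t: "\<And>u v. (u, v) \<in> A \<Longrightarrow> t u < t v"
    using acyclic_strict_labelling network by (auto simp: network_def)
  have "\<exists>v. (u, v) \<in> A" if "u \<in> V" "\<not> is_leaf A u" for u
  proof -
    have "is_root A u \<or> is_tree_node A u"
      using network that no_ret by (auto simp: network_def)
    then have "card {v. (u, v) \<in> A} \<noteq> 0"
      by (auto simp: is_root_def is_tree_node_def outdeg_def)
    then show ?thesis by (metis Collect_empty_eq card.empty)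
  qed
  then have "hgt_consistent (V, A) t"
    using t no_ret by (intro hgt_consistentI) (fastforce simp: less_eq_real_def)+
  then show ?thesis by blast
qed

locale binary_network =
  fixes V :: "'a set" and A :: "('a \<times> 'a) set"
  assumes network: "network (V, A)" and binary: "binary (V, A)"
begin

lemma finite_nodes: "finite V"
  and arcs_subset: "A \<subseteq> V \<times> V"
  and acyclic_arcs: "acyclic A"
  using network by (auto simp: network_def)

lemma arc_nodes: "(u, v) \<in> A \<Longrightarrow> u \<in> V" "(u, v) \<in> A \<Longrightarrow> v \<in> V"
  using arcs_subset by auto

lemma no_loop: "(v, v) \<notin> A"
  using acyclic_arcs by (auto simp: acyclic_def)

lemma no_2cycle: "(u, v) \<in> A \<Longrightarrow> (v, u) \<notin> A"
  using acyclic_arcs by (meson acyclic_def trancl.trancl_into_trancl r_into_trancl)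

lemma finite_preds: "finite (preds A v)"
  by (rule finite_subset[of _ V]) (use arcs_subset finite_nodes in \<open>auto simp: preds_def\<close>)

lemma finite_succs: "finite (succs A v)"
  by (rule finite_subset[of _ V]) (use arcs_subset finite_nodes in \<open>auto simp: succs_def\<close>)

lemma node_kinds: "v \<in> V \<Longrightarrow> is_root A v \<or> is_tree_node A v \<or> is_ret A v \<or> is_leaf A v"
  using network by (auto simp: network_def)

lemma root_exists_unique: "\<exists>!r. r \<in> V \<and> is_root A r"
  using network by (simp add: network_def)

lemma binary_degrees: "v \<in> V \<Longrightarrow> is_tree_node A v \<or> is_ret A v \<Longrightarrow> indeg A v + outdeg A v = 3"
  using binary by (auto simp: binary_def)

lemma root_no_pred: "is_root A r \<Longrightarrow> (u, r) \<notin> A"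
  using finite_preds[of r] by (auto simp: is_root_def indeg_eq_card_preds preds_def)

lemma leaf_no_succ: "is_leaf A x \<Longrightarrow> (x, w) \<notin> A"
  using finite_succs[of x] by (auto simp: is_leaf_def outdeg_eq_card_succs succs_def)

lemma arc_source_not_leaf: "(u, v) \<in> A \<Longrightarrow> \<not> is_leaf A u"
  using leaf_no_succ by blast

lemma preds_leaf:
  assumes "is_leaf A x"
  shows "preds A x = {parent A x}"
proof -
  have "card (preds A x) = 1" using assms by (simp add: is_leaf_def indeg_eq_card_preds)
  then obtain p where "preds A x = {p}" by (rule card_1_singletonE)
  moreover from this have "parent A x = p" by (rule parent_eqI)
  ultimately show ?thesis by simp
qed

lemma arc_to_leaf_iff: "is_leaf A x \<Longrightarrow> (u, x) \<in> A \<longleftrightarrow> u = parent A x"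
  using preds_leaf by (auto simp: preds_def set_eq_iff)

lemma tree_node_of_two_succs:
  assumes "(v, a) \<in> A" "(v, b) \<in> A" "a \<noteq> b"
  obtains p where "preds A v = {p}" "succs A v = {a, b}"
proof -
  have ab: "{a, b} \<subseteq> succs A v" using assms by (auto simp: succs_def)
  then have "card {a, b} \<le> card (succs A v)" by (rule card_mono[OF finite_succs])
  then have "2 \<le> card (succs A v)" using assms(3) by simp
  then have "is_tree_node A v"
    using node_kinds[OF arc_nodes(1)[OF assms(1)]]
    by (auto simp: is_root_def is_ret_def is_leaf_def outdeg_eq_card_succs)
  then have "card (preds A v) = 1" "card (succs A v) = 2"
    using binary_degrees[OF arc_nodes(1)[OF assms(1)]]
    by (auto simp: is_tree_node_def indeg_eq_card_preds outdeg_eq_card_succs)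
  moreover have "{a, b} = succs A v"
    by (rule card_seteq[OF finite_succs ab]) (use assms(3) \<open>card (succs A v) = 2\<close> in simp)
  moreover obtain p where "preds A v = {p}"
    using \<open>card (preds A v) = 1\<close> by (rule card_1_singletonE)
  ultimately show thesis using that by simp
qed

lemma ret_degrees:
  assumes "v \<in> V" "is_ret A v"
  obtains u w c where "preds A v = {u, w}" "u \<noteq> w" "succs A v = {c}"
proof -
  have "card (preds A v) = 2" "card (succs A v) = 1"
    using assms binary_degrees[OF assms(1)]
    by (auto simp: is_ret_def indeg_eq_card_preds outdeg_eq_card_succs)
  moreover from \<open>card (succs A v) = 1\<close> obtain c where "succs A v = {c}"
    by (rule card_1_singletonE)
  ultimately show thesis
    using that by (auto simp: card_2_iff)
qed

lemma tree_node_succs: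
  assumes "v \<in> V" "is_tree_node A v"
  obtains a b where "succs A v = {a, b}" "a \<noteq> b"
proof -
  have "card (succs A v) = 2"
    using assms binary_degrees[OF assms(1)]
    by (auto simp: is_tree_node_def indeg_eq_card_preds outdeg_eq_card_succs)
  then show thesis
    using that by (auto simp: card_2_iff)
qed

lemma single_leaf_tree:
  assumes "\<And>v. v \<in> V \<Longrightarrow> is_root A v \<or> is_leaf A v"
  shows "is_tree (V, A) \<and> card (leaves (V, A)) = 1"
proof -
  obtain r where r: "r \<in> V" "is_root A r" and unique: "\<And>r'. r' \<in> V \<Longrightarrow> is_root A r' \<Longrightarrow> r' = r"
    using root_exists_unique by blast
  have "card (succs A r) = 1" using r(2) by (simp add: is_root_def outdeg_eq_card_succs)
  then obtain c where succs_r: "succs A r = {c}" by (rule card_1_singletonE)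
  then have rc: "(r, c) \<in> A" by (auto simp: succs_def)
  have "leaves (V, A) = {c}"
  proof
    show "{c} \<subseteq> leaves (V, A)"
      using assms arc_nodes(2)[OF rc] root_no_pred[of c r] rc by (auto simp: leaves_def)
    show "leaves (V, A) \<subseteq> {c}"
    proof
      fix l assume "l \<in> leaves (V, A)"
      then have l: "is_leaf A l" by (simp add: leaves_def)
      then have pl: "(parent A l, l) \<in> A" using preds_leaf by (auto simp: preds_def)
      then have "parent A l = r"
        using assms unique arc_nodes(1) arc_source_not_leaf by blast
      then show "l \<in> {c}" using pl succs_r by (auto simp: succs_def)
    qed
  qed
  moreover have "\<not> is_ret A v" if "v \<in> V" for v
    using assms[OF that] by (auto simp: is_ret_def is_root_def is_leaf_def)
  ultimately show ?thesis using network by (simp add: is_tree_def)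
qed

end

definition contract_arcs :: "('a \<times> 'a) set \<Rightarrow> 'a set \<Rightarrow> ('a \<times> 'a) set \<Rightarrow> ('a \<times> 'a) set" where
  "contract_arcs A D E = {(a, b) \<in> A. a \<notin> D \<and> b \<notin> D} \<union> E"

text \<open>
  The reduction of a cherry (x, y) is the contraction with D = {x, p} and E = {(q, y)}, where p is
  the parent of x and y and q the parent of p; that of a reticulated cherry (x, y) has
  D = {px, py} and E = {(z, x), (g, y)}, where px and py are the parents of x and y, z is the
  other parent of the reticulation px and g the parent of py.
\<close>

locale contraction = binary_network +
  fixes D :: "'a set" and E :: "('a \<times> 'a) set"
  assumes D_nonempty: "D \<noteq> {}" and D_subset: "D \<subseteq> V"
    and root_notin_D: "is_root A r \<Longrightarrow> r \<notin> D"
    and shortcuts_subset: "E \<subseteq> (V - D) \<times> (V - D)"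
    and shortcuts_paths: "E \<subseteq> A\<^sup>+"
    and degrees_kept: "v \<in> V - D \<Longrightarrow>
      indeg (contract_arcs A D E) v = indeg A v \<and> outdeg (contract_arcs A D E) v = outdeg A v"
    and shortcut_to_leaf: "(a, b) \<in> E \<Longrightarrow> is_leaf A b"
    and shortcut_via_D: "(a, b) \<in> E \<Longrightarrow> \<exists>c\<in>D. (a, c) \<in> A"
    and arc_into_D: "u \<in> V - D \<Longrightarrow> v \<in> D \<Longrightarrow> (u, v) \<in> A \<Longrightarrow> \<exists>w. (u, w) \<in> E"
    and arc_out_of_D: "a \<in> D \<Longrightarrow> (a, b) \<in> A \<Longrightarrow> is_leaf A b \<or> (b \<in> D \<and> is_ret A b)"
    and D_leaf_child: "u \<in> D \<Longrightarrow> \<not> is_leaf A u \<Longrightarrow> \<exists>w. (u, w) \<in> A \<and> is_leaf A w"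
    and D_ret_parents: "r \<in> D \<Longrightarrow> is_ret A r \<Longrightarrow> (u, r) \<in> A \<Longrightarrow> (v, r) \<in> A \<Longrightarrow> u \<noteq> v
      \<Longrightarrow> (u \<in> D) \<noteq> (v \<in> D)"
begin

lemma node_kinds_kept:
  assumes "v \<in> V - D"
  shows "is_root (contract_arcs A D E) v = is_root A v" "is_tree_node (contract_arcs A D E) v = is_tree_node A v"
    "is_ret (contract_arcs A D E) v = is_ret A v" "is_leaf (contract_arcs A D E) v = is_leaf A v"
  using degrees_kept[OF assms] by (simp_all add: is_root_def is_tree_node_def is_ret_def is_leaf_def)

lemma binary_network_contract: "binary_network (V - D) (contract_arcs A D E)"
proof -
  let ?A' = "contract_arcs A D E"
  have "?A' \<subseteq> A\<^sup>+"
    using shortcuts_paths by (auto simp: contract_arcs_def)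
  moreover have "acyclic (A\<^sup>+)"
    using acyclic_arcs by (simp add: acyclic_def)
  ultimately have acyclic: "acyclic ?A'"
    by (rule acyclic_subset[rotated])
  have subset: "?A' \<subseteq> (V - D) \<times> (V - D)"
    using arcs_subset shortcuts_subset by (auto simp: contract_arcs_def)
  obtain r where r: "r \<in> V" "is_root A r" and unique: "\<And>r'. r' \<in> V \<Longrightarrow> is_root A r' \<Longrightarrow> r' = r"
    using root_exists_unique by blast
  have "r \<in> V - D" using r root_notin_D by blast
  then have root: "\<exists>!r. r \<in> V - D \<and> is_root ?A' r"
    using r(2) unique node_kinds_kept(1) by (intro ex1I[of _ r]) auto
  have kinds: "is_root ?A' v \<or> is_tree_node ?A' v \<or> is_ret ?A' v \<or> is_leaf ?A' v" if "v \<in> V - D" for v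
    using node_kinds[of v] node_kinds_kept[OF that] that by simp
  have degrees: "indeg ?A' v + outdeg ?A' v = 3" if "v \<in> V - D" "is_tree_node ?A' v \<or> is_ret ?A' v" for v
    using binary_degrees[of v] node_kinds_kept[OF that(1)] degrees_kept[OF that(1)] that by simp
  have "network (V - D, ?A')"
    unfolding network_def prod.case using finite_nodes acyclic subset root kinds by blast
  moreover have "binary (V - D, ?A')"
    unfolding binary_def prod.case using degrees by blast
  ultimately show ?thesis by (simp add: binary_network_def)
qed

lemma card_contract_less: "card (V - D) < card V"
proof (rule psubset_card_mono[OF finite_nodes])
  show "V - D \<subset> V" using D_nonempty D_subset by blast
qed

lemma hgt_consistent_contract:
  assumes hgt: "hgt_consistent (V, A) t" and shortcuts_increase: "\<And>a b. (a, b) \<in> E \<Longrightarrow> t a < t b"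
  shows "hgt_consistent (V - D, contract_arcs A D E) t"
proof (rule hgt_consistentI)
  fix u v assume uv: "(u, v) \<in> contract_arcs A D E"
  show "t u \<le> t v \<and> (t u = t v \<longrightarrow> is_ret (contract_arcs A D E) v)"
  proof (cases "(u, v) \<in> E")
    case True
    then have "t u < t v" by (rule shortcuts_increase)
    then show ?thesis by simp
  next
    case False
    then have "(u, v) \<in> A" "v \<in> V - D" using uv arc_nodes by (auto simp: contract_arcs_def)
    then show ?thesis
      using hgt_arc_le[OF hgt] hgt_arc_eq_imp_ret[OF hgt] node_kinds_kept(3) by simp
  qed
next
  fix u assume u: "u \<in> V - D" "\<not> is_leaf (contract_arcs A D E) u"
  then obtain v where v: "(u, v) \<in> A" "t u < t v"
    using hgt_increasing_child[OF hgt, of u] node_kinds_kept(4) by auto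
  show "\<exists>v. (u, v) \<in> contract_arcs A D E \<and> t u < t v"
  proof (cases "v \<in> D")
    case True
    then obtain w where "(u, w) \<in> E" using arc_into_D u(1) v(1) by blast
    moreover from this have "t u < t w" by (rule shortcuts_increase)
    ultimately show ?thesis by (auto simp: contract_arcs_def)
  next
    case False then show ?thesis using u(1) v by (auto simp: contract_arcs_def)
  qed
next
  fix r u v
  assume r: "r \<in> V - D" "is_ret (contract_arcs A D E) r"
    and arcs: "(u, r) \<in> contract_arcs A D E" "(v, r) \<in> contract_arcs A D E" and "u \<noteq> v"
  have "is_ret A r" using r node_kinds_kept(3) by simp
  then have "\<not> is_leaf A r" by (rule ret_not_leaf)
  then have "(a, r) \<notin> E" for a using shortcut_to_leaf by blast
  then have "(u, r) \<in> A" "(v, r) \<in> A" using arcs by (auto simp: contract_arcs_def)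
  then show "(t u = t r) \<noteq> (t v = t r)"
    using hgt_ret_parents[OF hgt _ \<open>is_ret A r\<close> _ _ \<open>u \<noteq> v\<close>] r(1) by simp
qed

definition label_bound :: "('a \<Rightarrow> real) \<Rightarrow> real" where
  "label_bound t' = Max (insert 0 (t' ` (V - D)))"

text \<open>Arcs leaving D end in leaves or in reticulations inside D, so D fits between the old
  labels and the leaves.\<close>

definition lift_labelling :: "('a \<Rightarrow> real) \<Rightarrow> 'a \<Rightarrow> real" where
  "lift_labelling t' v =
     (if is_leaf A v then label_bound t' + 2 else if v \<in> D then label_bound t' + 1 else t' v)"

context
  fixes t' :: "'a \<Rightarrow> real"
  assumes hgt': "hgt_consistent (V - D, contract_arcs A D E) t'"
begin

lemma lift_labelling_kept: "v \<in> V - D \<Longrightarrow> \<not> is_leaf A v \<Longrightarrow> lift_labelling t' v = t' v"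
  and label_bound_ge: "v \<in> V - D \<Longrightarrow> t' v \<le> label_bound t'"
  using finite_nodes by (simp_all add: lift_labelling_def label_bound_def)

lemma lift_labelling_arc:
  assumes uv: "(u, v) \<in> A"
  shows "lift_labelling t' u \<le> lift_labelling t' v \<and>
    (lift_labelling t' u = lift_labelling t' v \<longrightarrow> is_ret A v)"
proof -
  have u: "u \<in> V" "\<not> is_leaf A u" using arc_nodes(1) arc_source_not_leaf uv by auto
  consider "is_leaf A v" | "\<not> is_leaf A v" "u \<in> D" | "\<not> is_leaf A v" "u \<notin> D" "v \<in> D"
    | "\<not> is_leaf A v" "u \<notin> D" "v \<notin> D" by blast
  then show ?thesis
  proof cases
    case 1 then show ?thesis
      using u label_bound_ge[of u] by (auto simp: lift_labelling_def)
  next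
    case 2 then show ?thesis
      using u arc_out_of_D[OF _ uv] by (auto simp: lift_labelling_def)
  next
    case 3 then show ?thesis
      using u label_bound_ge[of u] by (auto simp: lift_labelling_def)
  next
    case 4
    then have "(u, v) \<in> contract_arcs A D E" "v \<in> V - D"
      using uv arc_nodes(2) by (auto simp: contract_arcs_def)
    then have "t' u \<le> t' v" "t' u = t' v \<Longrightarrow> is_ret A v"
      using hgt_arc_le[OF hgt'] hgt_arc_eq_imp_ret[OF hgt'] node_kinds_kept(3) by blast+
    moreover have "lift_labelling t' u = t' u" "lift_labelling t' v = t' v"
      using 4 u \<open>v \<in> V - D\<close> lift_labelling_kept by auto
    ultimately show ?thesis by simp
  qed
qed

lemma lift_labelling_increasing_child:
  assumes u: "u \<in> V" "\<not> is_leaf A u"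
  shows "\<exists>v. (u, v) \<in> A \<and> lift_labelling t' u < lift_labelling t' v"
proof (cases "u \<in> D")
  case True
  then show ?thesis using D_leaf_child u(2) by (fastforce simp: lift_labelling_def)
next
  case False
  then have u': "u \<in> V - D" "lift_labelling t' u = t' u" "t' u \<le> label_bound t'"
    using u lift_labelling_kept label_bound_ge by auto
  then obtain w where w: "(u, w) \<in> contract_arcs A D E" "t' u < t' w"
    using hgt_increasing_child[OF hgt'] node_kinds_kept(4) u(2) by blast
  show ?thesis
  proof (cases "(u, w) \<in> E")
    case True
    then obtain c where "c \<in> D" "(u, c) \<in> A" using shortcut_via_D by blast
    then show ?thesis using u' by (intro exI[of _ c]) (auto simp: lift_labelling_def)
  next
    case False
    then have "(u, w) \<in> A" "w \<in> V - D"
      using w(1) arc_nodes(2) by (auto simp: contract_arcs_def)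
    then show ?thesis
      using u' w(2) lift_labelling_kept[of w] by (intro exI[of _ w]) (auto simp: lift_labelling_def)
  qed
qed

lemma lift_labelling_ret_parents:
  assumes r: "r \<in> V" "is_ret A r" and arcs: "(u, r) \<in> A" "(v, r) \<in> A" and "u \<noteq> v"
  shows "(lift_labelling t' u = lift_labelling t' r) \<noteq> (lift_labelling t' v = lift_labelling t' r)"
proof -
  have non_leaves: "\<not> is_leaf A r" "\<not> is_leaf A u" "\<not> is_leaf A v"
    using ret_not_leaf[OF r(2)] arc_source_not_leaf arcs by blast+
  show ?thesis
  proof (cases "r \<in> D")
    case True
    then have "(u \<in> D) \<noteq> (v \<in> D)" using D_ret_parents r(2) arcs \<open>u \<noteq> v\<close> by blast
    then show ?thesis
      using True non_leaves arc_nodes(1)[OF arcs(1)] arc_nodes(1)[OF arcs(2)]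
        label_bound_ge[of u] label_bound_ge[of v] by (auto simp: lift_labelling_def)
  next
    case False
    then have "u \<notin> D" "v \<notin> D" using arc_out_of_D arcs non_leaves(1) by blast+
    then have "(u, r) \<in> contract_arcs A D E" "(v, r) \<in> contract_arcs A D E"
      using arcs False by (auto simp: contract_arcs_def)
    then have "(t' u = t' r) \<noteq> (t' v = t' r)"
      using hgt_ret_parents[OF hgt'] r False node_kinds_kept(3) \<open>u \<noteq> v\<close> by blast
    then show ?thesis
      using False \<open>u \<notin> D\<close> \<open>v \<notin> D\<close> non_leaves by (simp add: lift_labelling_def)
  qed
qed

lemma hgt_consistent_uncontract: "hgt_consistent (V, A) (lift_labelling t')"
  using lift_labelling_arc lift_labelling_increasing_child lift_labelling_ret_parents
  by (intro hgt_consistentI) blast+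

end

end

locale cherry = binary_network +
  fixes x y p q :: 'a
  assumes leaf_x: "is_leaf A x" and leaf_y: "is_leaf A y" and x_neq_y: "x \<noteq> y"
    and preds_x: "preds A x = {p}" and preds_y: "preds A y = {p}"
    and succs_p: "succs A p = {x, y}" and preds_p: "preds A p = {q}"
begin

lemma arcs_iff:
  "(a, x) \<in> A \<longleftrightarrow> a = p" "(a, y) \<in> A \<longleftrightarrow> a = p" "(a, p) \<in> A \<longleftrightarrow> a = q"
  "(p, b) \<in> A \<longleftrightarrow> b = x \<or> b = y" "(x, b) \<notin> A" "(y, b) \<notin> A"
  using preds_x preds_y preds_p succs_p leaf_no_succ[OF leaf_x] leaf_no_succ[OF leaf_y]
  by (auto simp: preds_def succs_def set_eq_iff)

lemma arcs: "(p, x) \<in> A" "(p, y) \<in> A" "(q, p) \<in> A"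
  by (simp_all add: arcs_iff)

lemma distinct_nodes: "p \<noteq> x" "p \<noteq> y" "q \<noteq> x" "q \<noteq> y" "q \<noteq> p"
  using arcs arcs_iff(5,6) no_loop by auto

lemma nodes_in: "x \<in> V" "y \<in> V" "p \<in> V" "q \<in> V"
  using arc_nodes arcs by auto

lemma not_ret_p: "\<not> is_ret A p"
  using preds_p by (simp add: is_ret_def indeg_eq_card_preds)

lemma reduce_pair_eq: "reduce_pair (V, A) (x, y) = (V - {x, p}, contract_arcs A {x, p} {(q, y)})"
proof -
  have "is_cherry (V, A) x y"
    using leaf_x leaf_y x_neq_y nodes_in arcs by (auto simp: is_cherry_def leaves_def)
  moreover have "parent A x = p" using preds_x by (rule parent_eqI)
  moreover have "indeg (A - {(p, x)}) p = 1" "outdeg (A - {(p, x)}) p = 1"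
  proof -
    have "{u. (u, p) \<in> A - {(p, x)}} = {q}" "{w. (p, w) \<in> A - {(p, x)}} = {y}"
      using arcs_iff distinct_nodes x_neq_y by auto
    then show "indeg (A - {(p, x)}) p = 1" "outdeg (A - {(p, x)}) p = 1"
      by (simp_all add: indeg_def outdeg_def)
  qed
  ultimately have "reduce_pair (V, A) (x, y) = suppress (V - {x}, A - {(p, x)}) p"
    using nodes_in distinct_nodes by (simp add: reduce_pair_def suppress_if_def Let_def)
  also have "\<dots> = (V - {x, p}, contract_arcs A {x, p} {(q, y)})"
    using arcs_iff distinct_nodes x_neq_y by (auto simp: suppress_def contract_arcs_def)
  finally show ?thesis .
qed

lemma degrees_kept:
  assumes v: "v \<in> V - {x, p}"
  shows "indeg (contract_arcs A {x, p} {(q, y)}) v = indeg A v \<and>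
    outdeg (contract_arcs A {x, p} {(q, y)}) v = outdeg A v"
proof -
  have "preds (contract_arcs A {x, p} {(q, y)}) v = (if v = y then {q} else preds A v)"
    using v arcs_iff by (auto simp: preds_def contract_arcs_def)
  then have "card (preds (contract_arcs A {x, p} {(q, y)}) v) = card (preds A v)"
    using preds_y by simp
  moreover have "card (succs (contract_arcs A {x, p} {(q, y)}) v) = card (succs A v)"
  proof -
    have "succs (contract_arcs A {x, p} {(q, y)}) v
        = (if v = q then insert y (succs A v - {p}) else succs A v)"
      using v arcs_iff by (auto simp: succs_def contract_arcs_def)
    moreover have "p \<in> succs A q" "y \<notin> succs A q"
      using arcs_iff distinct_nodes by (simp_all add: succs_def)
    ultimately show ?thesis
      using card_insert_Diff_swap[OF finite_succs] by simp
  qed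
  ultimately show ?thesis
    by (simp add: indeg_eq_card_preds outdeg_eq_card_succs)
qed

lemma contraction: "contraction V A {x, p} {(q, y)}"
proof unfold_locales
  show "{x, p} \<noteq> {}" by simp
  show "{x, p} \<subseteq> V" using nodes_in by simp
  show "r \<notin> {x, p}" if "is_root A r" for r
    using root_no_pred[OF that] arcs by auto
  show "{(q, y)} \<subseteq> (V - {x, p}) \<times> (V - {x, p})"
    using nodes_in distinct_nodes x_neq_y by auto
  show "{(q, y)} \<subseteq> A\<^sup>+"
    using arcs by (auto intro: trancl_into_trancl)
  show "indeg (contract_arcs A {x, p} {(q, y)}) v = indeg A v \<and>
      outdeg (contract_arcs A {x, p} {(q, y)}) v = outdeg A v" if "v \<in> V - {x, p}" for v
    using that by (rule degrees_kept)
  show "is_leaf A b" if "(a, b) \<in> {(q, y)}" for a b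
    using that leaf_y by simp
  show "\<exists>c\<in>{x, p}. (a, c) \<in> A" if "(a, b) \<in> {(q, y)}" for a b
    using that arcs by auto
  show "\<exists>w. (u, w) \<in> {(q, y)}" if "u \<in> V - {x, p}" "v \<in> {x, p}" "(u, v) \<in> A" for u v
    using that arcs_iff by auto
  show "is_leaf A b \<or> b \<in> {x, p} \<and> is_ret A b" if "a \<in> {x, p}" "(a, b) \<in> A" for a b
    using that arcs_iff leaf_x leaf_y by auto
  show "\<exists>w. (u, w) \<in> A \<and> is_leaf A w" if "u \<in> {x, p}" "\<not> is_leaf A u" for u
    using that arcs leaf_x by auto
  show "(u \<in> {x, p}) \<noteq> (w \<in> {x, p})"
    if "r \<in> {x, p}" "is_ret A r" "(u, r) \<in> A" "(w, r) \<in> A" "u \<noteq> w" for r u w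
    using that not_ret_p leaf_not_ret[OF leaf_x] by auto
qed

lemma hgt_shortcut_increases:
  assumes "hgt_consistent (V, A) t"
  shows "t q < t y"
proof -
  have "t q \<le> t p" using hgt_arc_le[OF assms arcs(3)] .
  also have "t p < t y" using hgt_arc_less[OF assms arcs(2) leaf_not_ret[OF leaf_y]] .
  finally show ?thesis .
qed

end

locale ret_cherry = binary_network +
  fixes x y px py z g :: 'a
  assumes leaf_x: "is_leaf A x" and leaf_y: "is_leaf A y"
    and preds_x: "preds A x = {px}" and preds_y: "preds A y = {py}"
    and preds_px: "preds A px = {py, z}" and z_neq_py: "z \<noteq> py" and succs_px: "succs A px = {x}"
    and preds_py: "preds A py = {g}" and succs_py: "succs A py = {px, y}"
begin

lemma arcs_iff:
  "(a, x) \<in> A \<longleftrightarrow> a = px" "(a, y) \<in> A \<longleftrightarrow> a = py" "(a, px) \<in> A \<longleftrightarrow> a = py \<or> a = z"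
  "(a, py) \<in> A \<longleftrightarrow> a = g" "(px, b) \<in> A \<longleftrightarrow> b = x" "(py, b) \<in> A \<longleftrightarrow> b = px \<or> b = y"
  "(x, b) \<notin> A" "(y, b) \<notin> A"
  using preds_x preds_y preds_px preds_py succs_px succs_py leaf_no_succ[OF leaf_x] leaf_no_succ[OF leaf_y]
  by (auto simp: preds_def succs_def set_eq_iff)

lemma arcs: "(px, x) \<in> A" "(py, y) \<in> A" "(py, px) \<in> A" "(z, px) \<in> A" "(g, py) \<in> A"
  by (simp_all add: arcs_iff)

lemma x_neq_y: "x \<noteq> y"
proof
  assume "x = y"
  then have "py = px" using arcs(2) arcs_iff(1) by simp
  then show False using arcs(3) no_loop by simp
qed

lemma distinct_nodes:
  "px \<noteq> py" "z \<noteq> py" "z \<noteq> px" "g \<noteq> py" "g \<noteq> px" "px \<noteq> x" "px \<noteq> y" "py \<noteq> x" "py \<noteq> y"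
  "z \<noteq> x" "z \<noteq> y" "g \<noteq> x" "g \<noteq> y"
  using arcs arcs_iff(1,2,7,8) z_neq_py no_loop no_2cycle[OF arcs(3)] by auto

lemma nodes_in: "x \<in> V" "y \<in> V" "px \<in> V" "py \<in> V" "z \<in> V" "g \<in> V"
  using arc_nodes arcs by auto

lemma ret_px: "is_ret A px"
  using preds_px succs_px z_neq_py by (simp add: is_ret_def indeg_eq_card_preds outdeg_eq_card_succs)

lemma not_ret_py: "\<not> is_ret A py"
  using preds_py by (simp add: is_ret_def indeg_eq_card_preds)

lemma reduce_pair_eq:
  "reduce_pair (V, A) (x, y) = (V - {px, py}, contract_arcs A {px, py} {(z, x), (g, y)})"
proof -
  define A1 where "A1 = {(a, b) \<in> A. a \<noteq> px \<and> b \<noteq> px} \<union> {(z, x)}"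
  have "parent A x = px" "parent A y = py" using preds_x preds_y by (simp_all add: parent_eqI)
  then have "is_ret_cherry (V, A) x y" "\<not> is_cherry (V, A) x y"
    using leaf_x leaf_y nodes_in x_neq_y distinct_nodes arcs ret_px arcs_iff
    by (auto simp: is_ret_cherry_def is_cherry_def leaves_def)
  moreover have "suppress_if (V, A - {(py, px)}) px = (V - {px}, A1)"
  proof -
    have "{u. (u, px) \<in> A - {(py, px)}} = {z}" "{w. (px, w) \<in> A - {(py, px)}} = {x}"
      using arcs_iff z_neq_py by auto
    then have "suppress_if (V, A - {(py, px)}) px = suppress (V, A - {(py, px)}) px"
      using nodes_in by (simp add: suppress_if_def indeg_def outdeg_def)
    also have "\<dots> = (V - {px}, A1)"
      using arcs_iff distinct_nodes by (auto simp: suppress_def A1_def)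
    finally show ?thesis .
  qed
  moreover have "suppress_if (V - {px}, A1) py = (V - {px, py}, contract_arcs A {px, py} {(z, x), (g, y)})"
  proof -
    have "{u. (u, py) \<in> A1} = {g}" "{w. (py, w) \<in> A1} = {y}"
      using arcs_iff distinct_nodes by (auto simp: A1_def)
    then have "suppress_if (V - {px}, A1) py = suppress (V - {px}, A1) py"
      using nodes_in distinct_nodes by (simp add: suppress_if_def indeg_def outdeg_def)
    also have "\<dots> = (V - {px, py}, contract_arcs A {px, py} {(z, x), (g, y)})"
      using arcs_iff distinct_nodes by (auto simp: suppress_def A1_def contract_arcs_def)
    finally show ?thesis .
  qed
  ultimately show ?thesis
    using \<open>parent A x = px\<close> \<open>parent A y = py\<close> by (simp add: reduce_pair_def Let_def)
qed

lemma degrees_kept: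
  assumes v: "v \<in> V - {px, py}"
  shows "indeg (contract_arcs A {px, py} {(z, x), (g, y)}) v = indeg A v \<and>
    outdeg (contract_arcs A {px, py} {(z, x), (g, y)}) v = outdeg A v"
proof -
  let ?A' = "contract_arcs A {px, py} {(z, x), (g, y)}"
  have "preds ?A' v = (if v = x then {z} else if v = y then {g} else preds A v)"
    using v arcs_iff distinct_nodes by (auto simp: preds_def contract_arcs_def)
  then have "card (preds ?A' v) = card (preds A v)"
    using preds_x preds_y by simp
  moreover have "card (succs ?A' v) = card (succs A v)"
  proof -
    define f where "f b = (if b = px then x else if b = py then y else b)" for b
    have "x \<notin> succs A v" "y \<notin> succs A v"
      using v arcs_iff by (auto simp: succs_def)
    then have "inj_on f (succs A v)"
      using distinct_nodes x_neq_y by (auto simp: inj_on_def f_def)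
    moreover have "succs ?A' v = f ` succs A v"
      using v arcs_iff distinct_nodes
      by (auto simp: succs_def contract_arcs_def f_def image_iff)
    ultimately show ?thesis by (simp add: card_image)
  qed
  ultimately show ?thesis
    by (simp add: indeg_eq_card_preds outdeg_eq_card_succs)
qed

lemma contraction: "contraction V A {px, py} {(z, x), (g, y)}"
proof unfold_locales
  show "{px, py} \<noteq> {}" by simp
  show "{px, py} \<subseteq> V" using nodes_in by simp
  show "r \<notin> {px, py}" if "is_root A r" for r
    using root_no_pred[OF that] arcs by auto
  show "{(z, x), (g, y)} \<subseteq> (V - {px, py}) \<times> (V - {px, py})"
    using nodes_in distinct_nodes by auto
  show "{(z, x), (g, y)} \<subseteq> A\<^sup>+"
    using arcs by (auto intro: trancl_into_trancl)
  show "indeg (contract_arcs A {px, py} {(z, x), (g, y)}) v = indeg A v \<and>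
      outdeg (contract_arcs A {px, py} {(z, x), (g, y)}) v = outdeg A v" if "v \<in> V - {px, py}" for v
    using that by (rule degrees_kept)
  show "is_leaf A b" if "(a, b) \<in> {(z, x), (g, y)}" for a b
    using that leaf_x leaf_y by auto
  show "\<exists>c\<in>{px, py}. (a, c) \<in> A" if "(a, b) \<in> {(z, x), (g, y)}" for a b
    using that arcs by auto
  show "\<exists>w. (u, w) \<in> {(z, x), (g, y)}" if "u \<in> V - {px, py}" "v \<in> {px, py}" "(u, v) \<in> A" for u v
    using that arcs_iff by auto
  show "is_leaf A b \<or> b \<in> {px, py} \<and> is_ret A b" if "a \<in> {px, py}" "(a, b) \<in> A" for a b
    using that arcs_iff leaf_x leaf_y ret_px by auto
  show "\<exists>w. (u, w) \<in> A \<and> is_leaf A w" if "u \<in> {px, py}" "\<not> is_leaf A u" for u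
    using that arcs leaf_x leaf_y by auto
  show "(u \<in> {px, py}) \<noteq> (w \<in> {px, py})"
    if "r \<in> {px, py}" "is_ret A r" "(u, r) \<in> A" "(w, r) \<in> A" "u \<noteq> w" for r u w
    using that not_ret_py arcs_iff distinct_nodes by auto
qed

lemma hgt_shortcuts_increase:
  assumes hgt: "hgt_consistent (V, A) t" and same_time: "t px = t py"
  shows "t z < t x" "t g < t y"
proof -
  have "(t py = t px) \<noteq> (t z = t px)"
    using hgt_ret_parents[OF hgt _ ret_px arcs(3,4)] nodes_in z_neq_py by auto
  then have "t z < t px"
    using hgt_arc_le[OF hgt arcs(4)] same_time by simp
  also have "t px < t x" using hgt_arc_less[OF hgt arcs(1) leaf_not_ret[OF leaf_x]] .
  finally show "t z < t x" .
  have "t g \<le> t py" using hgt_arc_le[OF hgt arcs(5)] .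
  also have "t py < t y" using hgt_arc_less[OF hgt arcs(2) leaf_not_ret[OF leaf_y]] .
  finally show "t g < t y" .
qed

end

context binary_network
begin

lemma cherry_of_is_cherry:
  assumes "is_cherry (V, A) x y"
  shows "cherry V A x y (parent A x) (parent A (parent A x))"
proof -
  have leaves: "is_leaf A x" "is_leaf A y" and "x \<noteq> y"
    using assms by (auto simp: is_cherry_def leaves_def)
  obtain p where "(p, x) \<in> A" "(p, y) \<in> A" using assms by (auto simp: is_cherry_def)
  then have arcs: "(parent A x, x) \<in> A" "(parent A x, y) \<in> A" "parent A y = parent A x"
    using arc_to_leaf_iff[OF leaves(1)] arc_to_leaf_iff[OF leaves(2)] by auto
  obtain q where "preds A (parent A x) = {q}" "succs A (parent A x) = {x, y}"
    using tree_node_of_two_succs[OF arcs(1,2) \<open>x \<noteq> y\<close>] .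
  moreover from this have "parent A (parent A x) = q" by (simp add: parent_eqI)
  ultimately show ?thesis
    using leaves \<open>x \<noteq> y\<close> preds_leaf[OF leaves(1)] preds_leaf[OF leaves(2)] arcs(3)
    by unfold_locales simp_all
qed

lemma ret_cherry_of_is_ret_cherry:
  assumes "is_ret_cherry (V, A) x y"
  obtains z where "ret_cherry V A x y (parent A x) (parent A y) z (parent A (parent A y))"
proof -
  let ?px = "parent A x" and ?py = "parent A y"
  have leaves: "is_leaf A x" "is_leaf A y" and ret: "is_ret A ?px"
    and "\<exists>q. (q, ?px) \<in> A \<and> (q, y) \<in> A"
    using assms by (auto simp: is_ret_cherry_def leaves_def)
  then have py_px: "(?py, ?px) \<in> A" using arc_to_leaf_iff[OF leaves(2)] by auto
  have px_x: "(?px, x) \<in> A" and py_y: "(?py, y) \<in> A"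
    using preds_leaf[OF leaves(1)] preds_leaf[OF leaves(2)] by (auto simp: preds_def)
  obtain u w c where preds_px: "preds A ?px = {u, w}" "u \<noteq> w" and "succs A ?px = {c}"
    using ret_degrees[OF arc_nodes(1)[OF px_x] ret] .
  then have succs_px: "succs A ?px = {x}" using px_x by (auto simp: succs_def)
  define z where "z = (if u = ?py then w else u)"
  have "?py \<in> preds A ?px" using py_px by (simp add: preds_def)
  then have "preds A ?px = {?py, z}" "z \<noteq> ?py" using preds_px by (auto simp: z_def)
  moreover have "?px \<noteq> y" using px_x leaf_no_succ[OF leaves(2)] by auto
  then obtain g where "preds A ?py = {g}" "succs A ?py = {?px, y}"
    using tree_node_of_two_succs[OF py_px py_y] by blast
  moreover from this have "parent A ?py = g" by (simp add: parent_eqI)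
  ultimately have "ret_cherry V A x y ?px ?py z (parent A ?py)"
    using leaves succs_px preds_leaf[OF leaves(1)] preds_leaf[OF leaves(2)]
    by unfold_locales simp_all
  then show thesis by (rule that)
qed

lemma cherry_reduction:
  assumes "is_cherry (V, A) x y"
  obtains D E where "contraction V A D E" "reduce_pair (V, A) (x, y) = (V - D, contract_arcs A D E)"
    "\<And>t a b. hgt_consistent (V, A) t \<Longrightarrow> (a, b) \<in> E \<Longrightarrow> t a < t b"
proof -
  interpret cherry V A x y "parent A x" "parent A (parent A x)"
    by (rule cherry_of_is_cherry[OF assms])
  show thesis
    by (rule that[OF contraction reduce_pair_eq]) (auto dest: hgt_shortcut_increases)
qed

lemma ret_cherry_reduction:
  assumes "is_ret_cherry (V, A) x y"
  obtains D E where "contraction V A D E" "reduce_pair (V, A) (x, y) = (V - D, contract_arcs A D E)"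
    "\<And>t a b. hgt_consistent (V, A) t \<Longrightarrow> t (parent A x) = t (parent A y) \<Longrightarrow> (a, b) \<in> E \<Longrightarrow> t a < t b"
proof -
  obtain z where "ret_cherry V A x y (parent A x) (parent A y) z (parent A (parent A y))"
    using ret_cherry_of_is_ret_cherry[OF assms] .
  then interpret ret_cherry V A x y "parent A x" "parent A y" z "parent A (parent A y)" .
  show thesis
    by (rule that[OF contraction reduce_pair_eq]) (auto dest: hgt_shortcuts_increase)
qed

definition inner_nodes :: "'a set" where
  "inner_nodes = {v \<in> V. \<not> is_root A v \<and> \<not> is_leaf A v}"

definition topmost :: "('a \<Rightarrow> real) \<Rightarrow> 'a \<Rightarrow> bool" where
  "topmost t v \<longleftrightarrow> v \<in> inner_nodes \<and> (\<forall>w \<in> inner_nodes. t w \<le> t v)"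

lemma topmost_exists:
  assumes "inner_nodes \<noteq> {}"
  obtains v where "topmost t v"
proof -
  have "finite inner_nodes" using finite_nodes by (simp add: inner_nodes_def)
  then have "Max (t ` inner_nodes) \<in> t ` inner_nodes" using assms by simp
  then obtain v where "v \<in> inner_nodes" "t v = Max (t ` inner_nodes)" by auto
  then show thesis
    using \<open>finite inner_nodes\<close> by (intro that) (auto simp: topmost_def Max_ge_iff)
qed

lemma child_above_topmost_is_leaf:
  assumes "topmost t v" "(a, w) \<in> A" "t v < t w"
  shows "is_leaf A w"
proof (rule ccontr)
  assume "\<not> is_leaf A w"
  then have "w \<in> inner_nodes"
    using arc_nodes(2)[OF assms(2)] root_no_pred assms(2) by (auto simp: inner_nodes_def)
  then show False using assms(1,3) by (auto simp: topmost_def)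
qed

lemma topmost_ret_gives_ret_cherry:
  assumes hgt: "hgt_consistent (V, A) t" and top: "topmost t v" and ret: "is_ret A v"
  shows "\<exists>x y. is_ret_cherry (V, A) x y \<and> t (parent A x) = t (parent A y)"
proof -
  have v: "v \<in> V" using top by (simp add: topmost_def inner_nodes_def)
  obtain u1 u2 c where preds_v: "preds A v = {u1, u2}" "u1 \<noteq> u2" and succs_v: "succs A v = {c}"
    using ret_degrees[OF v ret] .
  obtain x where vx: "(v, x) \<in> A" "t v < t x"
    using hgt_increasing_child[OF hgt v ret_not_leaf[OF ret]] by blast
  have leaf_x: "is_leaf A x" by (rule child_above_topmost_is_leaf[OF top vx])
  have "(t u1 = t v) \<noteq> (t u2 = t v)"
    using hgt_ret_parents[OF hgt v ret] preds_v by (auto simp: preds_def)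
  then obtain u where uv: "(u, v) \<in> A" "t u = t v"
    using preds_v by (auto simp: preds_def set_eq_iff)
  have u: "u \<in> V" "\<not> is_leaf A u" using uv(1) arc_nodes(1) arc_source_not_leaf by auto
  obtain y where uy: "(u, y) \<in> A" "t u < t y"
    using hgt_increasing_child[OF hgt u] by blast
  have leaf_y: "is_leaf A y" using child_above_topmost_is_leaf[OF top uy(1)] uy(2) uv(2) by simp
  have "parent A x = v" "parent A y = u"
    using arc_to_leaf_iff[OF leaf_x] arc_to_leaf_iff[OF leaf_y] vx(1) uy(1) by auto
  moreover have "u \<noteq> v" using uv(1) no_loop by auto
  ultimately have "is_ret_cherry (V, A) x y"
    using leaf_x leaf_y arc_nodes(2)[OF vx(1)] arc_nodes(2)[OF uy(1)] ret uv(1) uy(1)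
    by (auto simp: is_ret_cherry_def leaves_def)
  moreover have "t (parent A x) = t (parent A y)"
    using \<open>parent A x = v\<close> \<open>parent A y = u\<close> uv(2) by simp
  ultimately show ?thesis by blast
qed

lemma topmost_tree_node_cases:
  assumes hgt: "hgt_consistent (V, A) t" and top: "topmost t v" and tree_node: "is_tree_node A v"
  shows "(\<exists>x y. is_cherry (V, A) x y) \<or> (\<exists>w. topmost t w \<and> is_ret A w)"
proof -
  have v: "v \<in> V" using top by (simp add: topmost_def inner_nodes_def)
  obtain x where vx: "(v, x) \<in> A" "t v < t x"
    using hgt_increasing_child[OF hgt v] tree_node by (auto simp: is_tree_node_def is_leaf_def)
  have leaf_x: "is_leaf A x" by (rule child_above_topmost_is_leaf[OF top vx])
  obtain a b where succs_v: "succs A v = {a, b}" "a \<noteq> b"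
    using tree_node_succs[OF v tree_node] .
  then obtain y where vy: "(v, y) \<in> A" "y \<noteq> x"
    by (metis insert_iff mem_Collect_eq succs_def)
  show ?thesis
  proof (cases "is_leaf A y")
    case True
    then have "is_cherry (V, A) x y"
      using leaf_x vx(1) vy arc_nodes(2) by (auto simp: is_cherry_def leaves_def)
    then show ?thesis by blast
  next
    case False
    then have "y \<in> inner_nodes"
      using arc_nodes(2)[OF vy(1)] root_no_pred vy(1) by (auto simp: inner_nodes_def)
    then have "t y = t v" using top hgt_arc_le[OF hgt vy(1)] by (auto simp: topmost_def)
    then have "topmost t y" "is_ret A y"
      using top \<open>y \<in> inner_nodes\<close> hgt_arc_eq_imp_ret[OF hgt vy(1)] by (auto simp: topmost_def)
    then show ?thesis by blast
  qed
qed

lemma reducible_pair_exists: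
  assumes hgt: "hgt_consistent (V, A) t" and "inner_nodes \<noteq> {}"
  shows "\<exists>x y. is_cherry (V, A) x y \<or> (is_ret_cherry (V, A) x y \<and> t (parent A x) = t (parent A y))"
proof -
  obtain v where top: "topmost t v" using topmost_exists[OF assms(2)] .
  then have "is_ret A v \<or> is_tree_node A v"
    using node_kinds by (auto simp: topmost_def inner_nodes_def)
  then show ?thesis
    using topmost_ret_gives_ret_cherry[OF hgt] topmost_tree_node_cases[OF hgt top] top by blast
qed

lemma reduce_pair_step:
  obtains V' A' where "reduce_pair (V, A) (x, y) = (V', A')" "binary_network V' A'"
    "\<exists>t. hgt_consistent (V', A') t \<Longrightarrow> \<exists>t. hgt_consistent (V, A) t"
proof -
  have "reduce_pair (V, A) (x, y) = (V, A)" if "\<not> is_cherry (V, A) x y" "\<not> is_ret_cherry (V, A) x y"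
    using that by (simp add: reduce_pair_def Let_def)
  then consider (cherry) "is_cherry (V, A) x y" | (ret_cherry) "is_ret_cherry (V, A) x y"
    | (other) "reduce_pair (V, A) (x, y) = (V, A)"
    by blast
  then show thesis
  proof cases
    case cherry
    then obtain D E where "contraction V A D E" "reduce_pair (V, A) (x, y) = (V - D, contract_arcs A D E)"
      by (rule cherry_reduction)
    then show thesis
      using that contraction.binary_network_contract contraction.hgt_consistent_uncontract by blast
  next
    case ret_cherry
    then obtain D E where "contraction V A D E" "reduce_pair (V, A) (x, y) = (V - D, contract_arcs A D E)"
      by (rule ret_cherry_reduction)
    then show thesis
      using that contraction.binary_network_contract contraction.hgt_consistent_uncontract by blast
  next
    case other
    then show thesis using that binary_network_axioms by blast
  qed
qed

end

lemma hgt_consistent_if_reduces_to_tree: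
  assumes "binary_network V A" "is_tree (reduce_seq (V, A) S)"
  shows "\<exists>t. hgt_consistent (V, A) t"
  using assms
proof (induction S arbitrary: V A)
  case Nil
  then show ?case using tree_hgt_consistent by (simp add: reduce_seq_def)
next
  case (Cons xy S)
  obtain x y where xy: "xy = (x, y)" by fastforce
  obtain V' A' where step: "reduce_pair (V, A) (x, y) = (V', A')" "binary_network V' A'"
    "\<exists>t. hgt_consistent (V', A') t \<Longrightarrow> \<exists>t. hgt_consistent (V, A) t"
    using binary_network.reduce_pair_step[OF Cons.prems(1)] by blast
  have "is_tree (reduce_seq (V', A') S)"
    using Cons.prems(2) step(1) xy by (simp add: reduce_seq_def)
  then show ?case using Cons.IH[OF step(2)] step(3) by blast
qed

lemma orchard_if_hgt_consistent:
  assumes "binary_network V A" "hgt_consistent (V, A) t"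
  shows "orchard (V, A)"
  using assms
proof (induction "card V" arbitrary: V A rule: less_induct)
  case less
  interpret binary_network V A by (rule less.prems(1))
  show ?case
  proof (cases "inner_nodes = {}")
    case True
    then have "is_tree (reduce_seq (V, A) []) \<and> card (leaves (reduce_seq (V, A) [])) = 1"
      using single_leaf_tree by (auto simp: inner_nodes_def reduce_seq_def)
    then show ?thesis unfolding orchard_def by blast
  next
    case False
    then obtain x y where
      "is_cherry (V, A) x y \<or> (is_ret_cherry (V, A) x y \<and> t (parent A x) = t (parent A y))"
      using reducible_pair_exists[OF less.prems(2)] by blast
    then obtain D E where "contraction V A D E"
      and reduce: "reduce_pair (V, A) (x, y) = (V - D, contract_arcs A D E)"
      and increase: "\<And>a b. (a, b) \<in> E \<Longrightarrow> t a < t b"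
      using cherry_reduction ret_cherry_reduction less.prems(2) by metis
    then interpret contraction V A D E by simp
    have "orchard (V - D, contract_arcs A D E)"
      using less.hyps[OF card_contract_less binary_network_contract
          hgt_consistent_contract[OF less.prems(2) increase]] .
    then obtain S where "is_tree (reduce_seq (V - D, contract_arcs A D E) S)"
      "card (leaves (reduce_seq (V - D, contract_arcs A D E) S)) = 1"
      by (auto simp: orchard_def)
    moreover have "reduce_seq (V, A) ((x, y) # S) = reduce_seq (V - D, contract_arcs A D E) S"
      using reduce by (simp add: reduce_seq_def)
    ultimately show ?thesis unfolding orchard_def by metis
  qed
qed

theorem mainTheorem5:
  fixes N :: "'a net"
  assumes "network N" and "binary N"
  shows "orchard N \<longleftrightarrow> (\<exists>t. hgt_consistent N t)"
proof -
  obtain V A where N: "N = (V, A)" by fastforce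
  then have "binary_network V A" using assms by (simp add: binary_network_def)
  show ?thesis
  proof
    assume "orchard N"
    then obtain S where "is_tree (reduce_seq N S)" by (auto simp: orchard_def)
    then show "\<exists>t. hgt_consistent N t"
      using hgt_consistent_if_reduces_to_tree \<open>binary_network V A\<close> N by blast
  next
    assume "\<exists>t. hgt_consistent N t"
    then show "orchard N"
      using orchard_if_hgt_consistent \<open>binary_network V A\<close> N by blast
  qed
qed

end
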